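(* The interval-sphere model structure on $p\mathsf{Ch}^*_\mathbb{Q}$ is compactly generated: every domain object of a map in $\mathbb{I}$ is compact with respect to relative sequential $\mathbb{I}$-cell complexes.
   Context: $p\mathsf{Ch}^*_\mathbb{Q}=\mathsf{Fun}([0,\infty),\mathsf{Ch}^*_\mathbb{Q})$, non-negatively graded rational cochain complexes. $S^k=\mathbb{Q}$ in degree $k$; $D^k$ ($k\ge1$) is $\mathbb{Q}$ in degrees $k-1,k$ with identity differential; $D^0=0$. $\mathbb{S}^k_{[s,t)}$ ($0\le s<t<\infty$) is $0$ at $r<s$, $S^k$ at $s\le r<t$, $D^k$ at $r\ge t$; $\mathbb{S}^k_{[s,\infty)}$ is $0$ at $r<s$, $S^k$ at $r\ge s$; $\mathbb{D}^k_s$ is $0$ at $r<s$, $D^k$ at $r\ge s$ (structure maps identities/inclusions). The interval-sphere model structure has weak equivalences the pointwise quasi-isomorphisms, generating cofibrations $\mathbb{I}=\{\mathbb{S}^k_{[s,t)}\to\mathbb{D}^k_s: k\in\mathbb{N},0\le s<t\le\infty\}$ and generating trivial cofibrations $\{\mathbb{D}^k_t\to\mathbb{D}^k_s:0\le s<t<\infty\}\cup\{0\to\mathbb{D}^k_s\}$. A relative sequential $\mathbb{I}$-cell complex is a map $\mathbb{X}\to\mathbb{Y}=\mathrm{colim}_{i\in\omega}\mathbb{Y}_i$ with $\mathbb{Y}_0=\mathbb{X}$ and each $\mathbb{Y}_{i+1}$ a pushout of $\mathbb{Y}_i$ along a direct sum (over an arbitrary set) of maps in $\mathbb{I}$. An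 object $\mathbb{U}$ is compact with respect to such complexes if $\mathrm{colim}_i\mathrm{Hom}(\mathbb{U},\mathbb{Y}_i)\to\mathrm{Hom}(\mathbb{U},\mathbb{Y})$ is a bijection for each of them. *)

theory Defs
  imports Complex_Main "HOL-Library.Function_Algebras" "HOL-Library.Extended_Real"
begin

text \<open>Rational vector spaces are modelled as rational subspaces of an ambient real vector
  space type (every rational vector space embeds this way).  To form direct sums we need
  functions into a real vector space to form a real vector space (pointwise).\<close>

instantiation "fun" :: (type, real_vector) real_vector
begin
definition scaleR_fun :: "real \<Rightarrow> ('a \<Rightarrow> 'b) \<Rightarrow> 'a \<Rightarrow> 'b" where
  "scaleR_fun c f = (\<lambda>x. c *\<^sub>R f x)"
instance
  by standard (auto simp: scaleR_fun_def fun_eq_iff scaleR_add_right scaleR_add_left)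
end

definition Qsubspace :: "'v::real_vector set \<Rightarrow> bool" where
  "Qsubspace V \<longleftrightarrow> 0 \<in> V \<and> (\<forall>x\<in>V. \<forall>y\<in>V. x + y \<in> V)
      \<and> (\<forall>q::rat. \<forall>x\<in>V. of_rat q *\<^sub>R x \<in> V)"

definition Qlinear_on :: "'v::real_vector set \<Rightarrow> ('v \<Rightarrow> 'w::real_vector) \<Rightarrow> bool" where
  "Qlinear_on V f \<longleftrightarrow> (\<forall>x\<in>V. \<forall>y\<in>V. f (x + y) = f x + f y)
      \<and> (\<forall>q::rat. \<forall>x\<in>V. f (of_rat q *\<^sub>R x) = of_rat q *\<^sub>R f x)"

section \<open>Persistence cochain complexes  pCh*_Q = Fun([0,oo), Ch*_Q)\<close>

text \<open>An object: for each time r (only r \<ge> 0 matters) and degree n :: nat (non-negative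
  grading) a rational vector space car r n, a differential dif r n : car r n \<rightarrow> car r (n+1)
  and structure maps str r r' n : car r n \<rightarrow> car r' n for r \<le> r'.\<close>

record 'v pcc =
  car :: "real \<Rightarrow> nat \<Rightarrow> 'v set"
  dif :: "real \<Rightarrow> nat \<Rightarrow> 'v \<Rightarrow> 'v"
  str :: "real \<Rightarrow> real \<Rightarrow> nat \<Rightarrow> 'v \<Rightarrow> 'v"

definition valid_pcc :: "'v::real_vector pcc \<Rightarrow> bool" where
  "valid_pcc X \<longleftrightarrow>
    (\<forall>r\<ge>0. \<forall>n. Qsubspace (car X r n)
       \<and> (\<forall>x\<in>car X r n. dif X r n x \<in> car X r (Suc n))
       \<and> Qlinear_on (car X r n) (dif X r n)
       \<and> (\<forall>x\<in>car X r n. dif X r (Suc n) (dif X r n x) = 0)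
       \<and> (\<forall>x\<in>car X r n. str X r r n x = x))
    \<and> (\<forall>r r' n. 0 \<le> r \<and> r \<le> r' \<longrightarrow>
         (\<forall>x\<in>car X r n. str X r r' n x \<in> car X r' n)
       \<and> Qlinear_on (car X r n) (str X r r' n)
       \<and> (\<forall>x\<in>car X r n. dif X r' n (str X r r' n x) = str X r r' (Suc n) (dif X r n x)))
    \<and> (\<forall>r r' r'' n. 0 \<le> r \<and> r \<le> r' \<and> r' \<le> r'' \<longrightarrow>
         (\<forall>x\<in>car X r n. str X r' r'' n (str X r r' n x) = str X r r'' n x))"

type_synonym ('v, 'w) pmap = "real \<Rightarrow> nat \<Rightarrow> 'v \<Rightarrow> 'w"

definition pmor :: "'v::real_vector pcc \<Rightarrow> 'w::real_vector pcc \<Rightarrow> ('v, 'w) pmap \<Rightarrow> bool" where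
  "pmor X Y f \<longleftrightarrow>
    (\<forall>r\<ge>0. \<forall>n. (\<forall>x\<in>car X r n. f r n x \<in> car Y r n)
       \<and> Qlinear_on (car X r n) (f r n)
       \<and> (\<forall>x\<in>car X r n. f r (Suc n) (dif X r n x) = dif Y r n (f r n x)))
    \<and> (\<forall>r r' n. 0 \<le> r \<and> r \<le> r' \<longrightarrow>
         (\<forall>x\<in>car X r n. f r' n (str X r r' n x) = str Y r r' n (f r n x)))"

text \<open>Equality of morphisms with source X (they only matter on the carriers of X).\<close>

definition meq :: "'v pcc \<Rightarrow> ('v, 'w) pmap \<Rightarrow> ('v, 'w) pmap \<Rightarrow> bool" where
  "meq X f g \<longleftrightarrow> (\<forall>r\<ge>0. \<forall>n. \<forall>x\<in>car X r n. f r n x = g r n x)"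

definition pcomp :: "('u, 'w) pmap \<Rightarrow> ('v, 'u) pmap \<Rightarrow> ('v, 'w) pmap" (infixl "\<bullet>" 55) where
  "pcomp g f = (\<lambda>r n x. g r n (f r n x))"

text \<open>All spheres and disks live in the ambient type real, with carrier \<rat> or {0}.
  sphere k s t = S^k_[s,t) (t = \<infinity> allowed), disk k s = D^k_s.\<close>

definition sphere :: "nat \<Rightarrow> real \<Rightarrow> ereal \<Rightarrow> real pcc" where
  "sphere k s t =
    (let C = (\<lambda>r n. if s \<le> r \<and> ereal r < t \<and> n = k then \<rat>
                    else if s \<le> r \<and> t \<le> ereal r \<and> 1 \<le> k \<and> (n = k \<or> Suc n = k) then \<rat>
                    else {0})
     in \<lparr> car = C,
          dif = (\<lambda>r n x. if s \<le> r \<and> t \<le> ereal r \<and> 1 \<le> k \<and> Suc n = k then x else 0),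
          str = (\<lambda>r r' n x. if C r' n = {0} then 0 else x) \<rparr>)"

definition disk :: "nat \<Rightarrow> real \<Rightarrow> real pcc" where
  "disk k s =
    (let C = (\<lambda>r n. if s \<le> r \<and> 1 \<le> k \<and> (n = k \<or> Suc n = k) then \<rat> else {0})
     in \<lparr> car = C,
          dif = (\<lambda>r n x. if s \<le> r \<and> 1 \<le> k \<and> Suc n = k then x else 0),
          str = (\<lambda>r r' n x. if C r' n = {0} then 0 else x) \<rparr>)"

text \<open>The generating cofibration S^k_[s,t) \<rightarrow> D^k_s (inclusion / identity / zero).\<close>

definition sph_incl :: "nat \<Rightarrow> real \<Rightarrow> (real, real) pmap" where
  "sph_incl k s = (\<lambda>r n x. if car (disk k s) r n = {0} then 0 else x)"

text \<open>Index triples (k, s, t) of the maps in \<I>: 0 \<le> s < t \<le> \<infinity>.\<close>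

definition Igen :: "(nat \<times> real \<times> ereal) set" where
  "Igen = {(k, s, t). 0 \<le> s \<and> ereal s < t}"

definition dsum :: "'a set \<Rightarrow> ('a \<Rightarrow> 'v::real_vector pcc) \<Rightarrow> ('a \<Rightarrow> 'v) pcc" where
  "dsum A X =
    \<lparr> car = (\<lambda>r n. {h. finite {a. h a \<noteq> 0} \<and> (\<forall>a. a \<notin> A \<longrightarrow> h a = 0)
                        \<and> (\<forall>a\<in>A. h a \<in> car (X a) r n)}),
      dif = (\<lambda>r n h a. if a \<in> A then dif (X a) r n (h a) else 0),
      str = (\<lambda>r r' n h a. if a \<in> A then str (X a) r r' n (h a) else 0) \<rparr>"

definition dsum_map :: "'a set \<Rightarrow> ('a \<Rightarrow> ('v, 'w::real_vector) pmap) \<Rightarrow> ('a \<Rightarrow> 'v, 'a \<Rightarrow> 'w) pmap" where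
  "dsum_map A f = (\<lambda>r n h a. if a \<in> A then f a r n (h a) else 0)"

text \<open>D is a pushout of B <-f- P -g-> C via u : B \<rightarrow> D, v : C \<rightarrow> D.  Colimits in
  pCh*_Q are computed pointwise and degreewise, and in rational vector spaces the pushout is
  (B \<oplus> C)/{(f p, - g p)}; so this says that the induced map from the explicit pushout
  to D is an isomorphism.\<close>

definition is_pushout ::
  "'p::real_vector pcc \<Rightarrow> 'b::real_vector pcc \<Rightarrow> 'c::real_vector pcc \<Rightarrow> ('p, 'b) pmap \<Rightarrow> ('p, 'c) pmap
   \<Rightarrow> 'd::real_vector pcc \<Rightarrow> ('b, 'd) pmap \<Rightarrow> ('c, 'd) pmap \<Rightarrow> bool" where
  "is_pushout P B C f g D u v \<longleftrightarrow>
     pmor P B f \<and> pmor P C g \<and> pmor B D u \<and> pmor C D v \<and> meq P (u \<bullet> f) (v \<bullet> g)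
     \<and> (\<forall>r\<ge>0. \<forall>n.
          (\<forall>z\<in>car D r n. \<exists>b\<in>car B r n. \<exists>c\<in>car C r n. z = u r n b + v r n c)
        \<and> (\<forall>b\<in>car B r n. \<forall>c\<in>car C r n. u r n b + v r n c = 0 \<longrightarrow>
             (\<exists>p\<in>car P r n. b = f r n p \<and> c = - g r n p)))"

fun ytr :: "(nat \<Rightarrow> ('v, 'v) pmap) \<Rightarrow> nat \<Rightarrow> nat \<Rightarrow> ('v, 'v) pmap" where
  "ytr y i 0 = (\<lambda>r n x. x)"
| "ytr y i (Suc m) = y (i + m) \<bullet> ytr y i m"

text \<open>L with maps \<iota> i : Y i \<rightarrow> L is the colimit of Y 0 \<rightarrow> Y 1 \<rightarrow> ... (computed pointwise
  and degreewise as a filtered colimit of rational vector spaces).\<close>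

definition is_seq_colim ::
  "(nat \<Rightarrow> 'v::real_vector pcc) \<Rightarrow> (nat \<Rightarrow> ('v, 'v) pmap) \<Rightarrow> 'w::real_vector pcc
   \<Rightarrow> (nat \<Rightarrow> ('v, 'w) pmap) \<Rightarrow> bool" where
  "is_seq_colim Y y L \<iota> \<longleftrightarrow>
     (\<forall>i. pmor (Y i) (Y (Suc i)) (y i) \<and> pmor (Y i) L (\<iota> i)
          \<and> meq (Y i) (\<iota> (Suc i) \<bullet> y i) (\<iota> i))
     \<and> (\<forall>r\<ge>0. \<forall>n.
          (\<forall>z\<in>car L r n. \<exists>i. \<exists>x\<in>car (Y i) r n. z = \<iota> i r n x)
        \<and> (\<forall>i. \<forall>x\<in>car (Y i) r n. \<iota> i r n x = 0 \<longrightarrow> (\<exists>m. ytr y i m r n x = 0)))"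

text \<open>Y 0 = X \<rightarrow> L = colim Y i, where Y (i+1) is the pushout of
  Y i <-\<phi> i- \<Oplus>_{a\<in>A i} S^{k}_[s,t) --\<Oplus> incl--> \<Oplus>_{a\<in>A i} D^k_s, with c i a = (k,s,t) \<in> \<I>.
  The map X \<rightarrow> L is \<iota> 0.\<close>

definition rel_seq_Icell_complex ::
  "(nat \<Rightarrow> 'a set) \<Rightarrow> (nat \<Rightarrow> 'a \<Rightarrow> nat \<times> real \<times> ereal)
   \<Rightarrow> (nat \<Rightarrow> ('a \<Rightarrow> real, 'v) pmap) \<Rightarrow> (nat \<Rightarrow> ('a \<Rightarrow> real, 'v) pmap)
   \<Rightarrow> (nat \<Rightarrow> 'v::real_vector pcc) \<Rightarrow> (nat \<Rightarrow> ('v, 'v) pmap)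
   \<Rightarrow> 'w::real_vector pcc \<Rightarrow> (nat \<Rightarrow> ('v, 'w) pmap) \<Rightarrow> bool" where
  "rel_seq_Icell_complex A c \<phi> \<psi> Y y L \<iota> \<longleftrightarrow>
     (\<forall>i. valid_pcc (Y i)) \<and> valid_pcc L
     \<and> (\<forall>i. \<forall>a\<in>A i. c i a \<in> Igen)
     \<and> (\<forall>i. is_pushout
             (dsum (A i) (\<lambda>a. case c i a of (k, s, t) \<Rightarrow> sphere k s t))
             (Y i)
             (dsum (A i) (\<lambda>a. case c i a of (k, s, t) \<Rightarrow> disk k s))
             (\<phi> i)
             (dsum_map (A i) (\<lambda>a. case c i a of (k, s, t) \<Rightarrow> sph_incl k s))
             (Y (Suc i)) (y i) (\<psi> i))
     \<and> is_seq_colim Y y L \<iota>"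

text \<open>Compactness of U: colim_i Hom(U, Y i) \<rightarrow> Hom(U, L) is a bijection (colimit of sets
  over \<omega>, written out: surjective and injective).\<close>

definition compact_wrt ::
  "'u::real_vector pcc \<Rightarrow> (nat \<Rightarrow> 'v::real_vector pcc) \<Rightarrow> (nat \<Rightarrow> ('v, 'v) pmap)
   \<Rightarrow> 'w::real_vector pcc \<Rightarrow> (nat \<Rightarrow> ('v, 'w) pmap) \<Rightarrow> bool" where
  "compact_wrt U Y y L \<iota> \<longleftrightarrow>
     (\<forall>h. pmor U L h \<longrightarrow> (\<exists>i g. pmor U (Y i) g \<and> meq U (\<iota> i \<bullet> g) h))
     \<and> (\<forall>i j g g'. pmor U (Y i) g \<longrightarrow> pmor U (Y j) g' \<longrightarrow> meq U (\<iota> i \<bullet> g) (\<iota> j \<bullet> g') \<longrightarrow>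
          (\<exists>m. i \<le> m \<and> j \<le> m \<and> meq U (ytr y i (m - i) \<bullet> g) (ytr y j (m - j) \<bullet> g')))"

end

theory Submission
  imports Defs
begin

text \<open>The interval sphere \<open>S^k_[s,t)\<close> is finitely presented: a map out of it amounts to a
  cocycle \<open>a\<close> of degree \<open>k\<close> at time \<open>s\<close> together with, when \<open>t < \<infinity>\<close>, a reason for \<open>a\<close> to die at
  time \<open>t\<close>: an element \<open>b\<close> of degree \<open>k - 1\<close> at time \<open>t\<close> whose differential is the image of \<open>a\<close>
  (for \<open>k = 0\<close>, where \<open>D^0 = 0\<close>, the image of \<open>a\<close> must vanish). In a sequential colimit,
  computed pointwise and degreewise, the elements \<open>a\<close> and \<open>b\<close> come from a finite stage, and
  the finitely many defining equations, which hold in the colimit, already hold a finite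
  number of steps later. Two maps out of the sphere are determined by the images of the two
  generators, which gives injectivity the same way.\<close>

lemma Qsubspace_zero: "Qsubspace V \<Longrightarrow> 0 \<in> V"
  by (simp add: Qsubspace_def)

lemma Qsubspace_scaleR_Rats: "Qsubspace V \<Longrightarrow> x \<in> V \<Longrightarrow> q \<in> \<rat> \<Longrightarrow> q *\<^sub>R x \<in> V"
  by (auto simp: Qsubspace_def elim!: Rats_cases)

lemma Qsubspace_diff:
  assumes "Qsubspace V" "x \<in> V" "y \<in> V"
  shows "x - y \<in> V"
proof -
  have "- y \<in> V"
    using Qsubspace_scaleR_Rats[OF assms(1,3), of "-1"] by simp
  then show ?thesis
    using assms(1,2) unfolding Qsubspace_def diff_conv_add_uminus by blast
qed

lemma Qlinear_on_add: "Qlinear_on V f \<Longrightarrow> x \<in> V \<Longrightarrow> y \<in> V \<Longrightarrow> f (x + y) = f x + f y"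
  by (simp add: Qlinear_on_def)

lemma Qlinear_on_scaleR_Rats:
  "Qlinear_on V f \<Longrightarrow> x \<in> V \<Longrightarrow> q \<in> \<rat> \<Longrightarrow> f (q *\<^sub>R x) = q *\<^sub>R f x"
  by (auto simp: Qlinear_on_def elim!: Rats_cases)

lemma Qlinear_on_zero: "Qlinear_on V f \<Longrightarrow> 0 \<in> V \<Longrightarrow> f 0 = 0"
  using Qlinear_on_add[of V f 0 0] by simp

lemma Qlinear_on_diff:
  assumes "Qlinear_on V f" "Qsubspace V" "x \<in> V" "y \<in> V"
  shows "f (x - y) = f x - f y"
  using Qlinear_on_add[OF assms(1) Qsubspace_diff[OF assms(2-4)] assms(4)] by simp

lemma valid_pcc_Qsubspace: "valid_pcc X \<Longrightarrow> 0 \<le> r \<Longrightarrow> Qsubspace (car X r n)"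
  by (simp add: valid_pcc_def)

lemma valid_pcc_zero_in: "valid_pcc X \<Longrightarrow> 0 \<le> r \<Longrightarrow> 0 \<in> car X r n"
  by (simp add: valid_pcc_Qsubspace Qsubspace_zero)

lemma valid_pcc_dif_in:
  "valid_pcc X \<Longrightarrow> 0 \<le> r \<Longrightarrow> x \<in> car X r n \<Longrightarrow> dif X r n x \<in> car X r (Suc n)"
  by (simp add: valid_pcc_def)

lemma valid_pcc_dif_Qlinear: "valid_pcc X \<Longrightarrow> 0 \<le> r \<Longrightarrow> Qlinear_on (car X r n) (dif X r n)"
  by (simp add: valid_pcc_def)

lemma valid_pcc_str_refl: "valid_pcc X \<Longrightarrow> 0 \<le> r \<Longrightarrow> x \<in> car X r n \<Longrightarrow> str X r r n x = x"
  by (simp add: valid_pcc_def)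

lemma valid_pcc_str_in:
  "valid_pcc X \<Longrightarrow> 0 \<le> r \<Longrightarrow> r \<le> r' \<Longrightarrow> x \<in> car X r n \<Longrightarrow> str X r r' n x \<in> car X r' n"
  by (simp add: valid_pcc_def)

lemma valid_pcc_str_Qlinear:
  "valid_pcc X \<Longrightarrow> 0 \<le> r \<Longrightarrow> r \<le> r' \<Longrightarrow> Qlinear_on (car X r n) (str X r r' n)"
  by (simp add: valid_pcc_def)

lemma valid_pcc_dif_str:
  "valid_pcc X \<Longrightarrow> 0 \<le> r \<Longrightarrow> r \<le> r' \<Longrightarrow> x \<in> car X r n \<Longrightarrow>
    dif X r' n (str X r r' n x) = str X r r' (Suc n) (dif X r n x)"
  by (simp add: valid_pcc_def)

lemma valid_pcc_str_trans:
  "valid_pcc X \<Longrightarrow> 0 \<le> r \<Longrightarrow> r \<le> r' \<Longrightarrow> r' \<le> r'' \<Longrightarrow> x \<in> car X r n \<Longrightarrow>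
    str X r' r'' n (str X r r' n x) = str X r r'' n x"
  by (simp add: valid_pcc_def)

lemma valid_pcc_str_zero: "valid_pcc X \<Longrightarrow> 0 \<le> r \<Longrightarrow> r \<le> r' \<Longrightarrow> str X r r' n 0 = 0"
  by (metis Qlinear_on_zero valid_pcc_str_Qlinear valid_pcc_zero_in)

lemma pmor_in: "pmor X Y f \<Longrightarrow> 0 \<le> r \<Longrightarrow> x \<in> car X r n \<Longrightarrow> f r n x \<in> car Y r n"
  by (simp add: pmor_def)

lemma pmor_Qlinear: "pmor X Y f \<Longrightarrow> 0 \<le> r \<Longrightarrow> Qlinear_on (car X r n) (f r n)"
  by (simp add: pmor_def)

lemma pmor_dif:
  "pmor X Y f \<Longrightarrow> 0 \<le> r \<Longrightarrow> x \<in> car X r n \<Longrightarrow> f r (Suc n) (dif X r n x) = dif Y r n (f r n x)"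
  by (simp add: pmor_def)

lemma pmor_str:
  "pmor X Y f \<Longrightarrow> 0 \<le> r \<Longrightarrow> r \<le> r' \<Longrightarrow> x \<in> car X r n \<Longrightarrow>
    f r' n (str X r r' n x) = str Y r r' n (f r n x)"
  by (simp add: pmor_def)

lemma pmor_zero: "pmor X Y f \<Longrightarrow> valid_pcc X \<Longrightarrow> 0 \<le> r \<Longrightarrow> f r n 0 = 0"
  by (metis Qlinear_on_zero pmor_Qlinear valid_pcc_zero_in)

lemma pmor_id: "pmor X X (\<lambda>r n x. x)"
  by (simp add: pmor_def Qlinear_on_def)

lemma pmor_pcomp:
  assumes f: "pmor X Y f" and g: "pmor Y Z g"
  shows "pmor X Z (g \<bullet> f)"
  unfolding pmor_def pcomp_def Qlinear_on_def
  using pmor_in[OF f] pmor_dif[OF f] pmor_str[OF f] pmor_in[OF g] pmor_dif[OF g] pmor_str[OF g]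
    Qlinear_on_add[OF pmor_Qlinear[OF f]] Qlinear_on_add[OF pmor_Qlinear[OF g]]
    Qlinear_on_scaleR_Rats[OF pmor_Qlinear[OF f]] Qlinear_on_scaleR_Rats[OF pmor_Qlinear[OF g]]
  by auto

lemma ytr_add: "ytr y i (a + b) = ytr y (i + a) b \<bullet> ytr y i a"
  by (induction b) (simp_all add: pcomp_def fun_eq_iff add.assoc)

section \<open>Sequential colimits\<close>

locale seq_colim =
  fixes Y :: "nat \<Rightarrow> 'v::real_vector pcc" and y :: "nat \<Rightarrow> ('v, 'v) pmap"
    and L :: "'w::real_vector pcc" and \<iota> :: "nat \<Rightarrow> ('v, 'w) pmap"
  assumes valid_stage: "\<And>i. valid_pcc (Y i)"
    and colim: "is_seq_colim Y y L \<iota>"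
begin

lemma pmor_step: "pmor (Y i) (Y (Suc i)) (y i)"
  using colim by (simp add: is_seq_colim_def)

lemma pmor_colim: "pmor (Y i) L (\<iota> i)"
  using colim by (simp add: is_seq_colim_def)

lemma colim_step: "0 \<le> r \<Longrightarrow> x \<in> car (Y i) r n \<Longrightarrow> \<iota> (Suc i) r n (y i r n x) = \<iota> i r n x"
  using colim by (simp add: is_seq_colim_def meq_def pcomp_def)

lemma colim_exhaust: "0 \<le> r \<Longrightarrow> z \<in> car L r n \<Longrightarrow> \<exists>i. \<exists>x\<in>car (Y i) r n. z = \<iota> i r n x"
  using colim by (simp add: is_seq_colim_def)

lemma colim_kernel: "0 \<le> r \<Longrightarrow> x \<in> car (Y i) r n \<Longrightarrow> \<iota> i r n x = 0 \<Longrightarrow> \<exists>m. ytr y i m r n x = 0"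
  using colim by (simp add: is_seq_colim_def)

lemma pmor_ytr: "pmor (Y i) (Y (i + m)) (ytr y i m)"
proof (induction m)
  case (Suc m)
  then show ?case
    using pmor_pcomp[OF Suc pmor_step] by simp
qed (simp add: pmor_id)

lemma colim_ytr: "0 \<le> r \<Longrightarrow> x \<in> car (Y i) r n \<Longrightarrow> \<iota> (i + m) r n (ytr y i m r n x) = \<iota> i r n x"
proof (induction m)
  case (Suc m)
  then show ?case
    using colim_step[OF Suc.prems(1) pmor_in[OF pmor_ytr Suc.prems]] by (simp add: pcomp_def)
qed simp

lemma meq_colim_ytr: "pmor U (Y i) g \<Longrightarrow> meq U (\<iota> (i + m) \<bullet> (ytr y i m \<bullet> g)) (\<iota> i \<bullet> g)"
  by (simp add: meq_def pcomp_def colim_ytr pmor_in)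

lemma colim_lift:
  assumes r: "0 \<le> r" and z: "z \<in> car L r n"
  shows "\<exists>i0. \<forall>N\<ge>i0. \<exists>x\<in>car (Y N) r n. \<iota> N r n x = z"
proof -
  obtain i x where x: "x \<in> car (Y i) r n" and z_eq: "z = \<iota> i r n x"
    using colim_exhaust[OF r z] by blast
  have "\<exists>x\<in>car (Y N) r n. \<iota> N r n x = z" if "i \<le> N" for N
    using pmor_in[OF pmor_ytr r x, of "N - i"] colim_ytr[OF r x, of "N - i"] that z_eq by auto
  then show ?thesis by blast
qed

lemma eventually_ytr_zero:
  assumes r: "0 \<le> r" and x: "x \<in> car (Y i) r n" and "\<iota> i r n x = 0"
  shows "\<forall>\<^sub>F q in sequentially. ytr y i q r n x = 0"
proof -
  obtain p where p: "ytr y i p r n x = 0"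
    using colim_kernel[OF r x] assms(3) by blast
  have "ytr y i q r n x = 0" if "p \<le> q" for q
  proof -
    have "ytr y i q r n x = ytr y (i + p) (q - p) r n (ytr y i p r n x)"
      using ytr_add[of y i p "q - p"] that by (simp add: pcomp_def)
    then show ?thesis
      using p pmor_zero[OF pmor_ytr valid_stage r] by simp
  qed
  then show ?thesis
    unfolding eventually_sequentially by blast
qed

lemma eventually_ytr_eq:
  assumes r: "0 \<le> r" and x: "x \<in> car (Y i) r n" and x': "x' \<in> car (Y i) r n"
    and "\<iota> i r n x = \<iota> i r n x'"
  shows "\<forall>\<^sub>F q in sequentially. ytr y i q r n x = ytr y i q r n x'"
proof -
  note sub = valid_pcc_Qsubspace[OF valid_stage r]
  have "\<iota> i r n (x - x') = 0"
    using Qlinear_on_diff[OF pmor_Qlinear[OF pmor_colim r] sub x x'] assms(4) by simp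
  from eventually_ytr_zero[OF r Qsubspace_diff[OF sub x x'] this]
  show ?thesis
    by eventually_elim (use Qlinear_on_diff[OF pmor_Qlinear[OF pmor_ytr r] sub x x'] in simp)
qed

end

section \<open>Maps out of an interval sphere\<close>

lemma Rats_neq_zero_set: "(\<rat>::real set) \<noteq> {0}"
  using Rats_1 by (metis one_neq_zero singletonD)

lemma pmor_Rats_value:
  fixes X :: "real pcc"
  assumes f: "pmor X Z f" and r0: "0 \<le> r0" "r0 \<le> r" and gen: "1 \<in> car X r0 n"
    and str_gen: "str X r0 r n 1 = 1" and gen': "1 \<in> car X r n" and x: "x \<in> \<rat>"
  shows "f r n x = x *\<^sub>R str Z r0 r n (f r0 n 1)"
proof -
  have "f r n x = x *\<^sub>R f r n 1"
    using Qlinear_on_scaleR_Rats[OF pmor_Qlinear[OF f] gen' x] r0 by simp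
  also have "f r n 1 = str Z r0 r n (f r0 n 1)"
    using pmor_str[OF f r0 gen] str_gen by simp
  finally show ?thesis .
qed

locale interval_sphere =
  fixes k :: nat and s :: real and t :: ereal
  assumes s_nonneg: "0 \<le> s" and s_less_t: "ereal s < t"
begin

abbreviation U :: "real pcc" where "U \<equiv> sphere k s t"

text \<open>For \<open>t = \<infinity>\<close> the value \<open>\<tau> = 0\<close> is junk; every statement about \<open>\<tau>\<close> is guarded by
  \<open>t \<noteq> \<infinity>\<close> or by \<open>filled\<close>, which says that the sphere becomes the disk \<open>D^k\<close> at time \<open>\<tau>\<close> and so
  acquires a second generator, in degree \<open>k - 1\<close>.\<close>

abbreviation \<tau> :: real where "\<tau> \<equiv> real_of_ereal t"

definition filled :: bool where "filled \<longleftrightarrow> t \<noteq> \<infinity> \<and> 1 \<le> k"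

lemma finite_t:
  assumes "t \<noteq> \<infinity>"
  shows "t = ereal \<tau>" "s < \<tau>"
  using assms s_less_t by (cases t; simp)+

lemma \<tau>_nonneg: "0 \<le> \<tau>"
  using s_nonneg s_less_t by (cases t) auto

lemma ereal_t_le_iff: "t \<le> ereal r \<longleftrightarrow> t \<noteq> \<infinity> \<and> \<tau> \<le> r"
  using s_less_t by (cases t) auto

lemma car_sphere:
  "car U r n = (if n = k \<and> s \<le> r \<and> (ereal r < t \<or> 1 \<le> k) \<or> Suc n = k \<and> filled \<and> \<tau> \<le> r
                then \<rat> else {0})"
proof -
  have "s \<le> r \<and> ereal r < t \<and> n = k \<or> s \<le> r \<and> t \<le> ereal r \<and> 1 \<le> k \<and> (n = k \<or> Suc n = k)
    \<longleftrightarrow> n = k \<and> s \<le> r \<and> (ereal r < t \<or> 1 \<le> k) \<or> Suc n = k \<and> filled \<and> \<tau> \<le> r"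
    unfolding filled_def ereal_t_le_iff using s_less_t
    by (cases t) (auto simp: not_less)
  moreover have "car U r n = (if s \<le> r \<and> ereal r < t \<and> n = k then \<rat>
      else if s \<le> r \<and> t \<le> ereal r \<and> 1 \<le> k \<and> (n = k \<or> Suc n = k) then \<rat> else {0})"
    by (simp add: sphere_def Let_def)
  moreover have "(if A then Q else if B then Q else Z) = (if A \<or> B then Q else Z)" for A B and Q Z :: "real set"
    by simp
  ultimately show ?thesis
    by metis
qed

lemma dif_sphere: "dif U r n x = (if Suc n = k \<and> filled \<and> \<tau> \<le> r then x else 0)"
proof -
  have "s \<le> r \<and> t \<le> ereal r \<and> 1 \<le> k \<and> Suc n = k \<longleftrightarrow> Suc n = k \<and> filled \<and> \<tau> \<le> r"
    unfolding filled_def ereal_t_le_iff using s_less_t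
    by (cases t) auto
  then show ?thesis
    by (simp add: sphere_def Let_def)
qed

lemma str_sphere: "str U r r' n x = (if car U r' n = {0} then 0 else x)"
  by (simp add: sphere_def Let_def)

lemma car_sphere_cases: "car U r n = \<rat> \<or> car U r n = {0}"
  by (metis car_sphere)

lemma zero_in_car_sphere: "0 \<in> car U r n"
  using car_sphere_cases[of r n] Rats_0 by force

lemma car_sphere_nonzero_iff:
  "car U r n \<noteq> {0} \<longleftrightarrow> n = k \<and> s \<le> r \<and> (ereal r < t \<or> 1 \<le> k) \<or> Suc n = k \<and> filled \<and> \<tau> \<le> r"
  using car_sphere[of r n] Rats_neq_zero_set by argo

lemma car_sphere_nonzero_cases:
  assumes "car U r n \<noteq> {0}"
  obtains (cell) "n = k" "s \<le> r" | (fill) "Suc n = k" "filled" "\<tau> \<le> r"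
  using assms car_sphere_nonzero_iff by blast

lemma one_in_car_sphere_cell: "1 \<in> car U s k"
  using s_less_t by (simp add: car_sphere)

lemma one_in_car_sphere_fill: "filled \<Longrightarrow> 1 \<in> car U \<tau> (k - 1)"
  by (simp add: car_sphere filled_def)

lemma pmor_sphere_zero: "pmor U Z f \<Longrightarrow> 0 \<le> r \<Longrightarrow> f r n 0 = 0"
  using Qlinear_on_zero[OF pmor_Qlinear zero_in_car_sphere] by blast

lemma sphere_hom_eqI:
  assumes f: "pmor U Z f" and g: "pmor U Z g"
    and cell_eq: "f s k 1 = g s k 1" and fill_eq: "filled \<Longrightarrow> f \<tau> (k - 1) 1 = g \<tau> (k - 1) 1"
  shows "meq U f g"
  unfolding meq_def
proof (intro allI impI ballI)
  fix r :: real and n x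
  assume r: "0 \<le> r" and x: "x \<in> car U r n"
  show "f r n x = g r n x"
  proof (cases "car U r n = {0}")
    case True
    then show ?thesis
      using x pmor_sphere_zero[OF f r] pmor_sphere_zero[OF g r] by simp
  next
    case False
    then have gen': "1 \<in> car U r n" and xq: "x \<in> \<rat>"
      using x False car_sphere_cases[of r n] by auto
    have str_gen: "str U r0 r n 1 = 1" for r0
      using False by (simp add: str_sphere)
    from False show ?thesis
    proof (cases rule: car_sphere_nonzero_cases)
      case cell
      then show ?thesis
        using pmor_Rats_value[OF f s_nonneg _ _ str_gen gen' xq]
          pmor_Rats_value[OF g s_nonneg _ _ str_gen gen' xq] one_in_car_sphere_cell
        by (simp add: cell_eq)
    next
      case fill
      then have "n = k - 1"
        by simp
      then show ?thesis
        using pmor_Rats_value[OF f \<tau>_nonneg _ _ str_gen gen' xq]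
          pmor_Rats_value[OF g \<tau>_nonneg _ _ str_gen gen' xq] one_in_car_sphere_fill fill fill_eq
        by simp
    qed
  qed
qed

definition sphere_gens :: "'w::real_vector pcc \<Rightarrow> 'w \<Rightarrow> 'w \<Rightarrow> bool" where
  "sphere_gens Z a b \<longleftrightarrow> a \<in> car Z s k \<and> (filled \<longrightarrow> b \<in> car Z \<tau> (k - 1))"

definition fill_boundary :: "'w::real_vector pcc \<Rightarrow> 'w \<Rightarrow> 'w" where
  "fill_boundary Z b = (if filled then dif Z \<tau> (k - 1) b else 0)"

definition sphere_rels :: "'w::real_vector pcc \<Rightarrow> 'w \<Rightarrow> 'w \<Rightarrow> bool" where
  "sphere_rels Z a b \<longleftrightarrow> dif Z s k a = 0 \<and> (t \<noteq> \<infinity> \<longrightarrow> str Z s \<tau> k a = fill_boundary Z b)"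

lemma sphere_data_of_hom:
  assumes g: "pmor U Z g"
  shows "sphere_gens Z (g s k 1) (g \<tau> (k - 1) 1)" and "sphere_rels Z (g s k 1) (g \<tau> (k - 1) 1)"
proof -
  note cell = one_in_car_sphere_cell
  show "sphere_gens Z (g s k 1) (g \<tau> (k - 1) 1)"
    unfolding sphere_gens_def
    using pmor_in[OF g s_nonneg cell] pmor_in[OF g \<tau>_nonneg one_in_car_sphere_fill] by blast
  have "dif Z s k (g s k 1) = g s (Suc k) (dif U s k 1)"
    using pmor_dif[OF g s_nonneg cell] by simp
  then have cocycle: "dif Z s k (g s k 1) = 0"
    using pmor_sphere_zero[OF g s_nonneg] by (simp add: dif_sphere)
  have "str Z s \<tau> k (g s k 1) = fill_boundary Z (g \<tau> (k - 1) 1)" if t: "t \<noteq> \<infinity>"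
  proof -
    have s_le_\<tau>: "s \<le> \<tau>"
      using finite_t[OF t] by simp
    have "str Z s \<tau> k (g s k 1) = g \<tau> k (str U s \<tau> k 1)"
      using pmor_str[OF g s_nonneg s_le_\<tau> cell] by simp
    also have "\<dots> = fill_boundary Z (g \<tau> (k - 1) 1)"
    proof (cases filled)
      case True
      then have "str U s \<tau> k 1 = dif U \<tau> (k - 1) 1"
        using s_le_\<tau> car_sphere_nonzero_iff[of \<tau> k] by (simp add: str_sphere dif_sphere filled_def)
      then show ?thesis
        using pmor_dif[OF g \<tau>_nonneg one_in_car_sphere_fill] True by (simp add: fill_boundary_def filled_def)
    next
      case False
      then have "car U \<tau> k = {0}"
        using t finite_t car_sphere_nonzero_iff[of \<tau> k] by (auto simp: filled_def)
      then show ?thesis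
        using False pmor_sphere_zero[OF g \<tau>_nonneg] by (simp add: str_sphere fill_boundary_def)
    qed
    finally show ?thesis .
  qed
  with cocycle show "sphere_rels Z (g s k 1) (g \<tau> (k - 1) 1)"
    by (simp add: sphere_rels_def)
qed

lemma pmor_sphere_gens: "pmor Z Z' f \<Longrightarrow> sphere_gens Z a b \<Longrightarrow> sphere_gens Z' (f s k a) (f \<tau> (k - 1) b)"
  unfolding sphere_gens_def using pmor_in s_nonneg \<tau>_nonneg by blast

lemma fill_boundary_in: "valid_pcc Z \<Longrightarrow> sphere_gens Z a b \<Longrightarrow> fill_boundary Z b \<in> car Z \<tau> k"
  using valid_pcc_dif_in[OF _ \<tau>_nonneg, of Z b "k - 1"] valid_pcc_zero_in[OF _ \<tau>_nonneg]
  by (auto simp: fill_boundary_def sphere_gens_def filled_def)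

lemma pmor_fill_boundary:
  assumes "valid_pcc Z" "pmor Z Z' f" "sphere_gens Z a b"
  shows "fill_boundary Z' (f \<tau> (k - 1) b) = f \<tau> k (fill_boundary Z b)"
  using assms pmor_dif[OF assms(2) \<tau>_nonneg, of b "k - 1"] pmor_zero[OF assms(2,1) \<tau>_nonneg]
  by (auto simp: fill_boundary_def sphere_gens_def filled_def)

lemma sphere_rels_pmor_iff:
  assumes Z: "valid_pcc Z" and f: "pmor Z Z' f" and gens: "sphere_gens Z a b"
  shows "sphere_rels Z' (f s k a) (f \<tau> (k - 1) b) \<longleftrightarrow>
    f s (Suc k) (dif Z s k a) = 0 \<and> (t \<noteq> \<infinity> \<longrightarrow> f \<tau> k (str Z s \<tau> k a) = f \<tau> k (fill_boundary Z b))"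
proof -
  have a: "a \<in> car Z s k"
    using gens by (simp add: sphere_gens_def)
  have "str Z' s \<tau> k (f s k a) = f \<tau> k (str Z s \<tau> k a)" if "t \<noteq> \<infinity>"
    using pmor_str[OF f s_nonneg _ a, of \<tau>] finite_t[OF that] by simp
  then show ?thesis
    using pmor_dif[OF f s_nonneg a] pmor_fill_boundary[OF Z f gens] by (auto simp: sphere_rels_def)
qed

definition gen_image :: "'w::real_vector pcc \<Rightarrow> 'w \<Rightarrow> 'w \<Rightarrow> real \<Rightarrow> nat \<Rightarrow> 'w" where
  "gen_image Z a b r n =
    (if n = k \<and> s \<le> r then str Z s r k a
     else if Suc n = k \<and> filled \<and> \<tau> \<le> r then str Z \<tau> r n b else 0)"

definition sphere_hom :: "'w::real_vector pcc \<Rightarrow> 'w \<Rightarrow> 'w \<Rightarrow> (real, 'w) pmap" where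
  "sphere_hom Z a b = (\<lambda>r n x. x *\<^sub>R gen_image Z a b r n)"

context
  fixes Z :: "'w::real_vector pcc" and a b :: 'w
  assumes Z: "valid_pcc Z" and gens: "sphere_gens Z a b" and rels: "sphere_rels Z a b"
begin

lemma gen_image_in:
  assumes "car U r n \<noteq> {0}" "0 \<le> r"
  shows "gen_image Z a b r n \<in> car Z r n"
  using assms(1)
proof (cases rule: car_sphere_nonzero_cases)
  case cell
  then show ?thesis
    using valid_pcc_str_in[OF Z s_nonneg] gens by (simp add: gen_image_def sphere_gens_def)
next
  case fill
  then show ?thesis
    using valid_pcc_str_in[OF Z \<tau>_nonneg] gens by (auto simp: gen_image_def sphere_gens_def)
qed

lemma dif_gen_image:
  assumes "car U r n \<noteq> {0}" "0 \<le> r"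
  shows "dif Z r n (gen_image Z a b r n) = dif U r n 1 *\<^sub>R gen_image Z a b r (Suc n)"
  using assms(1)
proof (cases rule: car_sphere_nonzero_cases)
  case cell
  have "dif Z r k (str Z s r k a) = str Z s r (Suc k) (dif Z s k a)"
    using valid_pcc_dif_str[OF Z s_nonneg cell(2)] gens by (simp add: sphere_gens_def)
  then show ?thesis
    using cell rels valid_pcc_str_zero[OF Z s_nonneg cell(2)]
    by (simp add: gen_image_def dif_sphere sphere_rels_def)
next
  case fill
  have t: "t \<noteq> \<infinity>" and s_less_\<tau>: "s < \<tau>"
    using fill(2) finite_t by (auto simp: filled_def)
  have b: "b \<in> car Z \<tau> n" and a: "a \<in> car Z s k"
    using gens fill by (auto simp: sphere_gens_def)
  have "dif Z r n (str Z \<tau> r n b) = str Z \<tau> r k (dif Z \<tau> n b)"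
    using valid_pcc_dif_str[OF Z \<tau>_nonneg fill(3) b] fill(1) by simp
  also have "dif Z \<tau> n b = str Z s \<tau> k a"
    using rels t fill by (auto simp: sphere_rels_def fill_boundary_def)
  also have "str Z \<tau> r k (str Z s \<tau> k a) = str Z s r k a"
    using valid_pcc_str_trans[OF Z s_nonneg _ fill(3) a] s_less_\<tau> by simp
  finally show ?thesis
    using fill s_less_\<tau> by (auto simp: gen_image_def dif_sphere)
qed

lemma str_gen_image:
  assumes "car U r n \<noteq> {0}" "0 \<le> r" "r \<le> r'"
  shows "str Z r r' n (gen_image Z a b r n) = str U r r' n 1 *\<^sub>R gen_image Z a b r' n"
  using assms(1)
proof (cases rule: car_sphere_nonzero_cases)
  case cell
  have a: "a \<in> car Z s k"
    using gens by (simp add: sphere_gens_def)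
  have "str Z r r' k (str Z s r k a) = str Z s r' k a"
    using valid_pcc_str_trans[OF Z s_nonneg cell(2) assms(3) a] .
  moreover have "str Z s r' k a = 0" if "car U r' k = {0}"
  proof -
    have k0: "k = 0" and t: "t \<noteq> \<infinity>" and \<tau>_le: "\<tau> \<le> r'"
      using that cell assms(3) car_sphere_nonzero_iff[of r' k] ereal_t_le_iff[of r'] by auto
    have "\<not> filled"
      unfolding filled_def using k0 by simp
    then have "str Z s \<tau> k a = 0"
      using rels t by (simp add: sphere_rels_def fill_boundary_def)
    then show ?thesis
      using valid_pcc_str_trans[OF Z s_nonneg _ \<tau>_le a] finite_t[OF t]
        valid_pcc_str_zero[OF Z \<tau>_nonneg \<tau>_le] by simp
  qed
  ultimately show ?thesis
    using cell assms(3) by (auto simp: gen_image_def str_sphere)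
next
  case fill
  have b: "b \<in> car Z \<tau> n"
    using gens fill by (auto simp: sphere_gens_def)
  have "car U r' n \<noteq> {0}"
    using fill assms(3) car_sphere_nonzero_iff[of r' n] by auto
  then show ?thesis
    using fill assms(3) valid_pcc_str_trans[OF Z \<tau>_nonneg fill(3) assms(3) b]
    by (auto simp: gen_image_def str_sphere)
qed

lemma pmor_sphere_hom: "pmor U Z (sphere_hom Z a b)"
  unfolding pmor_def
proof (intro conjI allI impI ballI)
  fix r :: real and n x
  assume r: "0 \<le> r" and x: "x \<in> car U r n"
  consider "x = 0" | "x \<in> \<rat>" "car U r n \<noteq> {0}"
    using x car_sphere_cases[of r n] by auto
  note x_cases = this
  show "sphere_hom Z a b r n x \<in> car Z r n"
    using x_cases valid_pcc_zero_in[OF Z r]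
      Qsubspace_scaleR_Rats[OF valid_pcc_Qsubspace[OF Z r] gen_image_in[OF _ r]]
    by cases (auto simp: sphere_hom_def)
  show "sphere_hom Z a b r (Suc n) (dif U r n x) = dif Z r n (sphere_hom Z a b r n x)"
    using x_cases
  proof cases
    case 1
    then show ?thesis
      using Qlinear_on_zero[OF valid_pcc_dif_Qlinear[OF Z r] valid_pcc_zero_in[OF Z r]]
      by (simp add: sphere_hom_def dif_sphere)
  next
    case 2
    then show ?thesis
      using Qlinear_on_scaleR_Rats[OF valid_pcc_dif_Qlinear[OF Z r] gen_image_in[OF _ r]]
        dif_gen_image[OF _ r]
      by (simp add: sphere_hom_def dif_sphere)
  qed
next
  fix r r' :: real and n x
  assume rr': "0 \<le> r \<and> r \<le> r'" and x: "x \<in> car U r n"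
  then have r: "0 \<le> r" and r': "r \<le> r'"
    by auto
  consider "x = 0" | "x \<in> \<rat>" "car U r n \<noteq> {0}"
    using x car_sphere_cases[of r n] by auto
  then show "sphere_hom Z a b r' n (str U r r' n x) = str Z r r' n (sphere_hom Z a b r n x)"
  proof cases
    case 1
    then show ?thesis
      using valid_pcc_str_zero[OF Z r r'] by (simp add: sphere_hom_def str_sphere)
  next
    case 2
    then show ?thesis
      using Qlinear_on_scaleR_Rats[OF valid_pcc_str_Qlinear[OF Z r r'] gen_image_in[OF _ r]]
        str_gen_image[OF _ r r']
      by (simp add: sphere_hom_def str_sphere)
  qed
qed (simp add: Qlinear_on_def sphere_hom_def scaleR_add_left)

lemma sphere_hom_cell: "sphere_hom Z a b s k 1 = a"
  using gens valid_pcc_str_refl[OF Z s_nonneg] by (simp add: sphere_hom_def gen_image_def sphere_gens_def)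

lemma sphere_hom_fill: "filled \<Longrightarrow> sphere_hom Z a b \<tau> (k - 1) 1 = b"
  using gens valid_pcc_str_refl[OF Z \<tau>_nonneg]
  by (auto simp: sphere_hom_def gen_image_def sphere_gens_def filled_def)

end

end

section \<open>Compactness of interval spheres\<close>

locale sphere_over_seq_colim = seq_colim Y y L \<iota> + interval_sphere k s t
  for Y :: "nat \<Rightarrow> 'v::real_vector pcc" and y L and \<iota> :: "nat \<Rightarrow> ('v, 'w::real_vector) pmap"
    and k s t
begin

lemma lift_sphere_gens:
  assumes "sphere_gens L a0 b0"
  obtains N a b where "sphere_gens (Y N) a b" "\<iota> N s k a = a0" "filled \<longrightarrow> \<iota> N \<tau> (k - 1) b = b0"
proof -
  have "a0 \<in> car L s k"
    using assms by (simp add: sphere_gens_def)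
  then obtain i0 where i0: "\<forall>N\<ge>i0. \<exists>a\<in>car (Y N) s k. \<iota> N s k a = a0"
    using colim_lift[OF s_nonneg] by blast
  obtain j0 where j0: "filled \<Longrightarrow> \<forall>N\<ge>j0. \<exists>b\<in>car (Y N) \<tau> (k - 1). \<iota> N \<tau> (k - 1) b = b0"
  proof (cases filled)
    case True
    then have "b0 \<in> car L \<tau> (k - 1)"
      using assms by (simp add: sphere_gens_def)
    then show ?thesis
      using colim_lift[OF \<tau>_nonneg] that by blast
  qed blast
  define N where "N = max i0 j0"
  obtain a where "a \<in> car (Y N) s k" "\<iota> N s k a = a0"
    using i0 max.cobounded1 unfolding N_def by blast
  moreover obtain b where "filled \<longrightarrow> b \<in> car (Y N) \<tau> (k - 1) \<and> \<iota> N \<tau> (k - 1) b = b0"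
    using j0 max.cobounded2 unfolding N_def by blast
  ultimately show thesis
    using that[of N a b] by (simp add: sphere_gens_def)
qed

lemma sphere_rels_eventually:
  assumes gens: "sphere_gens (Y N) a b" and rels: "sphere_rels L (\<iota> N s k a) (\<iota> N \<tau> (k - 1) b)"
  obtains p where "sphere_rels (Y (N + p)) (ytr y N p s k a) (ytr y N p \<tau> (k - 1) b)"
proof -
  note rels_iff = sphere_rels_pmor_iff[OF valid_stage _ gens]
  have a: "a \<in> car (Y N) s k"
    using gens by (simp add: sphere_gens_def)
  have cocycle: "\<iota> N s (Suc k) (dif (Y N) s k a) = 0"
    and bound: "t \<noteq> \<infinity> \<Longrightarrow> \<iota> N \<tau> k (str (Y N) s \<tau> k a) = \<iota> N \<tau> k (fill_boundary (Y N) b)"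
    using rels unfolding rels_iff[OF pmor_colim] by auto
  have "\<forall>\<^sub>F q in sequentially. ytr y N q s (Suc k) (dif (Y N) s k a) = 0"
    using eventually_ytr_zero[OF s_nonneg valid_pcc_dif_in[OF valid_stage s_nonneg a] cocycle] .
  moreover have "\<forall>\<^sub>F q in sequentially. t \<noteq> \<infinity> \<longrightarrow>
      ytr y N q \<tau> k (str (Y N) s \<tau> k a) = ytr y N q \<tau> k (fill_boundary (Y N) b)"
  proof (cases "t = \<infinity>")
    case False
    have "str (Y N) s \<tau> k a \<in> car (Y N) \<tau> k"
      using valid_pcc_str_in[OF valid_stage s_nonneg _ a] finite_t[OF False] by simp
    from eventually_ytr_eq[OF \<tau>_nonneg this fill_boundary_in[OF valid_stage gens] bound[OF False]]
    show ?thesis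
      by simp
  qed simp
  ultimately obtain p where
    "ytr y N p s (Suc k) (dif (Y N) s k a) = 0"
    "t \<noteq> \<infinity> \<longrightarrow> ytr y N p \<tau> k (str (Y N) s \<tau> k a) = ytr y N p \<tau> k (fill_boundary (Y N) b)"
    unfolding eventually_sequentially by (metis (full_types) le_sup_iff order.refl)
  then have "sphere_rels (Y (N + p)) (ytr y N p s k a) (ytr y N p \<tau> (k - 1) b)"
    unfolding rels_iff[OF pmor_ytr] by blast
  then show thesis ..
qed

lemma hom_factors_through_stage:
  assumes h: "pmor U L h"
  shows "\<exists>i g. pmor U (Y i) g \<and> meq U (\<iota> i \<bullet> g) h"
proof -
  note data = sphere_data_of_hom[OF h]
  obtain N a b where gens: "sphere_gens (Y N) a b"
    and a: "\<iota> N s k a = h s k 1" and b: "filled \<longrightarrow> \<iota> N \<tau> (k - 1) b = h \<tau> (k - 1) 1"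
    using lift_sphere_gens[OF data(1)] by blast
  have "sphere_rels L (\<iota> N s k a) (\<iota> N \<tau> (k - 1) b)"
    using data(2) a b by (simp add: sphere_rels_def fill_boundary_def)
  then obtain p where rels: "sphere_rels (Y (N + p)) (ytr y N p s k a) (ytr y N p \<tau> (k - 1) b)"
    using sphere_rels_eventually[OF gens] by blast
  have gens': "sphere_gens (Y (N + p)) (ytr y N p s k a) (ytr y N p \<tau> (k - 1) b)"
    using pmor_sphere_gens[OF pmor_ytr gens] .
  define g where "g = sphere_hom (Y (N + p)) (ytr y N p s k a) (ytr y N p \<tau> (k - 1) b)"
  have g: "pmor U (Y (N + p)) g"
    unfolding g_def using pmor_sphere_hom[OF valid_stage gens' rels] .
  have "meq U (\<iota> (N + p) \<bullet> g) h"
  proof (rule sphere_hom_eqI[OF pmor_pcomp[OF g pmor_colim] h])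
    show "(\<iota> (N + p) \<bullet> g) s k 1 = h s k 1"
      using sphere_hom_cell[OF valid_stage gens' rels] colim_ytr[OF s_nonneg] gens a
      by (simp add: g_def pcomp_def sphere_gens_def)
    show "(\<iota> (N + p) \<bullet> g) \<tau> (k - 1) 1 = h \<tau> (k - 1) 1" if filled
      using sphere_hom_fill[OF valid_stage gens' rels that] colim_ytr[OF \<tau>_nonneg] gens b that
      by (simp add: g_def pcomp_def sphere_gens_def)
  qed
  with g show ?thesis
    by blast
qed

lemma hom_eq_at_later_stage:
  assumes G: "pmor U (Y N) G" and G': "pmor U (Y N) G'" and eq: "meq U (\<iota> N \<bullet> G) (\<iota> N \<bullet> G')"
  obtains p where "meq U (ytr y N p \<bullet> G) (ytr y N p \<bullet> G')"
proof -
  have eventually_eq: "\<forall>\<^sub>F q in sequentially. ytr y N q r n (G r n 1) = ytr y N q r n (G' r n 1)"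
    if "0 \<le> r" "1 \<in> car U r n" for r n
    using eventually_ytr_eq[OF that(1) pmor_in[OF G that] pmor_in[OF G' that]] eq that
    by (simp add: meq_def pcomp_def)
  have "\<forall>\<^sub>F q in sequentially. filled \<longrightarrow>
      ytr y N q \<tau> (k - 1) (G \<tau> (k - 1) 1) = ytr y N q \<tau> (k - 1) (G' \<tau> (k - 1) 1)"
    using eventually_eq[OF \<tau>_nonneg one_in_car_sphere_fill] by (cases filled) simp_all
  with eventually_eq[OF s_nonneg one_in_car_sphere_cell] obtain p where
    "ytr y N p s k (G s k 1) = ytr y N p s k (G' s k 1)"
    "filled \<longrightarrow> ytr y N p \<tau> (k - 1) (G \<tau> (k - 1) 1) = ytr y N p \<tau> (k - 1) (G' \<tau> (k - 1) 1)"
    unfolding eventually_sequentially by (metis (full_types) le_sup_iff order.refl)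
  then have "meq U (ytr y N p \<bullet> G) (ytr y N p \<bullet> G')"
    using sphere_hom_eqI[OF pmor_pcomp[OF G pmor_ytr[of N p]] pmor_pcomp[OF G' pmor_ytr[of N p]]]
    by (simp add: pcomp_def)
  then show thesis ..
qed

lemma hom_eq_eventually:
  assumes g: "pmor U (Y i) g" and g': "pmor U (Y j) g'" and eq: "meq U (\<iota> i \<bullet> g) (\<iota> j \<bullet> g')"
  shows "\<exists>m. i \<le> m \<and> j \<le> m \<and> meq U (ytr y i (m - i) \<bullet> g) (ytr y j (m - j) \<bullet> g')"
proof -
  define N where "N = max i j"
  have Ni: "i + (N - i) = N" and Nj: "j + (N - j) = N"
    by (auto simp: N_def)
  define G where "G = ytr y i (N - i) \<bullet> g"
  define G' where "G' = ytr y j (N - j) \<bullet> g'"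
  have G: "pmor U (Y N) G" and G': "pmor U (Y N) G'"
    unfolding G_def G'_def using pmor_pcomp[OF g pmor_ytr] pmor_pcomp[OF g' pmor_ytr] Ni Nj by metis+
  have "meq U (\<iota> N \<bullet> G) (\<iota> N \<bullet> G')"
    using eq meq_colim_ytr[OF g, of "N - i"] meq_colim_ytr[OF g', of "N - j"]
    unfolding G_def G'_def Ni Nj by (simp add: meq_def)
  then obtain p where p: "meq U (ytr y N p \<bullet> G) (ytr y N p \<bullet> G')"
    using hom_eq_at_later_stage[OF G G'] by blast
  have "ytr y i (N + p - i) = ytr y N p \<bullet> ytr y i (N - i)"
    "ytr y j (N + p - j) = ytr y N p \<bullet> ytr y j (N - j)"
    using ytr_add[of y i "N - i" p] ytr_add[of y j "N - j" p] Ni Nj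
    by (simp_all add: N_def)
  with p have "meq U (ytr y i (N + p - i) \<bullet> g) (ytr y j (N + p - j) \<bullet> g')"
    by (simp add: G_def G'_def pcomp_def)
  then show ?thesis
    by (intro exI[of _ "N + p"]) (auto simp: N_def)
qed

lemma compact_wrt_sphere: "compact_wrt U Y y L \<iota>"
  unfolding compact_wrt_def using hom_factors_through_stage hom_eq_eventually by blast

end

theorem mainTheorem4:
  fixes A :: "nat \<Rightarrow> 'a set" and c :: "nat \<Rightarrow> 'a \<Rightarrow> nat \<times> real \<times> ereal"
    and \<phi> \<psi> :: "nat \<Rightarrow> ('a \<Rightarrow> real, 'v::real_vector) pmap"
    and Y :: "nat \<Rightarrow> 'v pcc" and y :: "nat \<Rightarrow> ('v, 'v) pmap"
    and L :: "'w::real_vector pcc" and \<iota> :: "nat \<Rightarrow> ('v, 'w) pmap"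
  assumes "rel_seq_Icell_complex A c \<phi> \<psi> Y y L \<iota>"
    and "(k, s, t) \<in> Igen"
  shows "compact_wrt (sphere k s t) Y y L \<iota>"
proof -
  interpret sphere_over_seq_colim Y y L \<iota> k s t
    using assms unfolding rel_seq_Icell_complex_def Igen_def by unfold_locales auto
  show ?thesis
    by (rule compact_wrt_sphere)
qed

end
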